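(* Let $p>3$ be a prime and let $x=r/m$, where $0<r<m$ are integers with $m$ prime to $p$. Then for every nonnegative integer $a$, $$\sum_{k=ap+1}^{ap+p-1} {(x)_{k}(1-x)_{k}\over (1)_k^2}\cdot{1\over k}\equiv {(x)_{ap}(1-x)_{ap}\over (1)^2_{ap}}\sum_{k=1}^{p-1}{(x)_{k}(1-x)_{k}\over (1)_k^2}\cdot{1\over ap+k}\pmod{p^2}.$$
   Context: $(y)_n=y(y+1)\cdots(y+n-1)$ denotes the Pochhammer symbol (with $(y)_0=1$). Congruences between rational numbers modulo $p^j$ mean that the difference is a rational number whose numerator is divisible by $p^j$ and whose denominator is prime to $p$. *)

theory Defs
  imports Complex_Main "HOL-Computational_Algebra.Primes"
begin

text \<open>For M = p^j with p prime this is the paper's notion.\<close>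
definition rat_cong :: "rat \<Rightarrow> rat \<Rightarrow> int \<Rightarrow> bool" where
  "rat_cong a b M \<longleftrightarrow>
     (case quotient_of (a - b) of (n, d) \<Rightarrow> M dvd n \<and> coprime d M)"

end

theory Submission
  imports Defs "HOL-Number_Theory.Number_Theory"
begin

text \<open>Write \<open>T n = (x)\<^sub>n (1 - x)\<^sub>n / n!\<^sup>2\<close> and \<open>t = a p\<close>. Since \<open>T (t + j) = T t * U j\<close> with
  \<open>U j = (x + t)\<^sub>j (1 - x + t)\<^sub>j / (1 + t)\<^sub>j\<^sup>2\<close>, both sides are \<open>T t\<close>, a \<open>p\<close>-integral number,
  times a sum over \<open>0 < j < p\<close>, and it suffices that \<open>\<Sum>j. (U j - T j) / (t + j) \<equiv> 0 (mod p\<^sup>2)\<close>.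
  To first order in \<open>t\<close> one has \<open>U j \<equiv> T j + t D j (mod p\<^sup>2)\<close>, where \<open>D j\<close> is the derivative of
  \<open>U j\<close> in \<open>t\<close> at \<open>t = 0\<close>, so modulo \<open>p\<^sup>2\<close> the sum is \<open>t \<Sum>j<p. D j / j\<close>. Exchanging the
  summations, \<open>\<Sum>j<p. D j / j \<equiv> \<Sum>0<j<p. 1 / j\<^sup>2 \<equiv> 0 (mod p)\<close>, the last step because \<open>p > 3\<close>.\<close>

section \<open>Rationals integral at a prime\<close>

definition p_integral :: "nat \<Rightarrow> rat \<Rightarrow> bool" where
  "p_integral p q \<longleftrightarrow> (\<exists>a b. b \<noteq> 0 \<and> coprime b (int p) \<and> q = of_int a / of_int b)"

definition p_power_dvd :: "nat \<Rightarrow> nat \<Rightarrow> rat \<Rightarrow> bool" where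
  "p_power_dvd p k q \<longleftrightarrow> (\<exists>s. p_integral p s \<and> q = of_nat p ^ k * s)"

lemma p_integral_of_int [simp]: "p_integral p (of_int a)"
  unfolding p_integral_def by (rule exI[of _ a], rule exI[of _ 1]) simp

lemma p_integral_of_nat [simp]: "p_integral p (of_nat n)"
  using p_integral_of_int[of p "int n"] by simp

lemma p_integral_numeral [simp]: "p_integral p (numeral n)"
  using p_integral_of_nat[of p "numeral n"] by simp

lemma p_integral_0 [simp]: "p_integral p 0"
  and p_integral_1 [simp]: "p_integral p 1"
  using p_integral_of_nat[of p 0] p_integral_of_nat[of p 1] by simp_all

lemma p_integral_add [intro]:
  assumes "p_integral p x" "p_integral p y" shows "p_integral p (x + y)"
proof -
  obtain a b c d where "b \<noteq> 0" "coprime b (int p)" "x = of_int a / of_int b"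
      "d \<noteq> 0" "coprime d (int p)" "y = of_int c / of_int d"
    using assms unfolding p_integral_def by blast
  then have "b * d \<noteq> 0 \<and> coprime (b * d) (int p) \<and> x + y = of_int (a * d + c * b) / of_int (b * d)"
    by (simp add: field_simps)
  then show ?thesis unfolding p_integral_def by blast
qed

lemma p_integral_mult [intro]:
  assumes "p_integral p x" "p_integral p y" shows "p_integral p (x * y)"
proof -
  obtain a b c d where "b \<noteq> 0" "coprime b (int p)" "x = of_int a / of_int b"
      "d \<noteq> 0" "coprime d (int p)" "y = of_int c / of_int d"
    using assms unfolding p_integral_def by blast
  then have "b * d \<noteq> 0 \<and> coprime (b * d) (int p) \<and> x * y = of_int (a * c) / of_int (b * d)"
    by simp
  then show ?thesis unfolding p_integral_def by blast
qed

lemma p_integral_uminus [intro]: "p_integral p x \<Longrightarrow> p_integral p (- x)"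
  unfolding p_integral_def by (metis minus_divide_left of_int_minus)

lemma p_integral_diff [intro]: "p_integral p x \<Longrightarrow> p_integral p y \<Longrightarrow> p_integral p (x - y)"
  using p_integral_add[of p x "- y"] by auto

lemma p_integral_divide_of_nat [intro]:
  assumes "prime p" "p_integral p x" "\<not> p dvd n" shows "p_integral p (x / of_nat n)"
proof -
  obtain a b where "b \<noteq> 0" "coprime b (int p)" "x = of_int a / of_int b"
    using assms(2) unfolding p_integral_def by blast
  moreover have "n \<noteq> 0" "coprime (int n) (int p)"
    using assms(1,3) prime_imp_coprime_nat[of p n] by (auto simp: coprime_commute intro!: gr0I)
  ultimately have "b * int n \<noteq> 0 \<and> coprime (b * int n) (int p) \<and> x / of_nat n = of_int a / of_int (b * int n)"
    by simp
  then show ?thesis unfolding p_integral_def by blast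
qed

lemma p_integral_sum [intro]: "(\<And>i. i \<in> A \<Longrightarrow> p_integral p (f i)) \<Longrightarrow> p_integral p (sum f A)"
  by (induction A rule: infinite_finite_induct) auto

lemma p_integral_power [intro]: "p_integral p x \<Longrightarrow> p_integral p (x ^ n)"
  by (induction n) auto

lemma p_power_dvdI: "p_integral p s \<Longrightarrow> q = of_nat p ^ k * s \<Longrightarrow> p_power_dvd p k q"
  unfolding p_power_dvd_def by blast

lemma p_power_dvd_0_left [simp]: "p_power_dvd p 0 x \<longleftrightarrow> p_integral p x"
  unfolding p_power_dvd_def by simp

lemma p_power_dvd_zero [simp]: "p_power_dvd p k 0"
  by (rule p_power_dvdI[OF p_integral_0]) simp

lemma p_power_dvd_multiple [simp]: "p_power_dvd p 1 (of_nat (a * p))"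
  by (rule p_power_dvdI[OF p_integral_of_nat[of p a]]) simp

lemma p_power_dvd_multiple_square: "p_integral p s \<Longrightarrow> p_power_dvd p 2 (of_nat (a * p) ^ 2 * s)"
  by (rule p_power_dvdI[of p "of_nat a ^ 2 * s"]) (simp_all add: p_integral_mult p_integral_power power_mult_distrib)

lemma p_power_dvd_add [intro]:
  assumes "p_power_dvd p k x" "p_power_dvd p k y" shows "p_power_dvd p k (x + y)"
proof -
  obtain s s' where "p_integral p s" "x = of_nat p ^ k * s" "p_integral p s'" "y = of_nat p ^ k * s'"
    using assms unfolding p_power_dvd_def by blast
  then show ?thesis by (intro p_power_dvdI[of p "s + s'"]) (auto simp: distrib_left)
qed

lemma p_power_dvd_uminus [intro]: "p_power_dvd p k x \<Longrightarrow> p_power_dvd p k (- x)"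
  unfolding p_power_dvd_def by (metis mult_minus_right p_integral_uminus)

lemma p_power_dvd_diff [intro]: "p_power_dvd p k x \<Longrightarrow> p_power_dvd p k y \<Longrightarrow> p_power_dvd p k (x - y)"
  using p_power_dvd_add[of p k x "- y"] by auto

lemma p_power_dvd_mult:
  assumes "p_power_dvd p k x" "p_power_dvd p l y" shows "p_power_dvd p (k + l) (x * y)"
proof -
  obtain s s' where "p_integral p s" "x = of_nat p ^ k * s" "p_integral p s'" "y = of_nat p ^ l * s'"
    using assms unfolding p_power_dvd_def by blast
  then show ?thesis by (intro p_power_dvdI[of p "s * s'"]) (auto simp: power_add)
qed

lemma p_power_dvd_mult_integral [intro]:
  "p_power_dvd p k x \<Longrightarrow> p_integral p y \<Longrightarrow> p_power_dvd p k (x * y)"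
  "p_power_dvd p k x \<Longrightarrow> p_integral p y \<Longrightarrow> p_power_dvd p k (y * x)"
  using p_power_dvd_mult[of p k x 0 y] p_power_dvd_mult[of p 0 y k x] by auto

lemma p_power_dvd_divide_of_nat [intro]:
  assumes "prime p" "p_power_dvd p k x" "\<not> p dvd n" shows "p_power_dvd p k (x / of_nat n)"
proof -
  obtain s where "p_integral p s" "x = of_nat p ^ k * s"
    using assms(2) unfolding p_power_dvd_def by blast
  with assms(1,3) show ?thesis by (intro p_power_dvdI[of p "s / of_nat n"]) auto
qed

lemma p_power_dvd_sum [intro]:
  "(\<And>i. i \<in> A \<Longrightarrow> p_power_dvd p k (f i)) \<Longrightarrow> p_power_dvd p k (sum f A)"
  by (induction A rule: infinite_finite_induct) auto

lemma rat_cong_if_p_power_dvd: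
  assumes "p_power_dvd p k (x - y)" shows "rat_cong x y (int p ^ k)"
proof -
  obtain c d where cd: "d \<noteq> 0" "coprime d (int p)" "x - y = of_nat p ^ k * (of_int c / of_int d)"
    using assms unfolding p_power_dvd_def p_integral_def by blast
  obtain n e where ne: "quotient_of (x - y) = (n, e)" by (cases "quotient_of (x - y)") auto
  have "e > 0" "coprime n e" using quotient_of_denom_pos[OF ne] quotient_of_coprime[OF ne] by auto
  have "(of_int n / of_int e :: rat) = of_int (int p ^ k * c) / of_int d"
    using quotient_of_div[OF ne] cd(3) by simp
  then have "(of_int (n * d) :: rat) = of_int (int p ^ k * c * e)"
    using \<open>e > 0\<close> cd(1) by (simp add: field_simps)
  then have eq: "n * d = int p ^ k * c * e" by (simp only: of_int_eq_iff)
  then have "e dvd n * d" by simp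
  then have "e dvd d" using \<open>coprime n e\<close> by (simp add: coprime_commute coprime_dvd_mult_right_iff)
  then have "coprime e (int p)" using cd(2) coprime_imp_coprime dvd_trans by blast
  then have "coprime e (int p ^ k)" by simp
  moreover have "int p ^ k dvd n"
  proof -
    have "int p ^ k dvd n * d" using eq by simp
    moreover have "coprime (int p ^ k) d" using cd(2) by (simp add: coprime_commute)
    ultimately show ?thesis by (simp add: coprime_dvd_mult_left_iff)
  qed
  ultimately show ?thesis unfolding rat_cong_def ne by simp
qed

section \<open>Integrality of \<open>(x)\<^sub>n / n!\<close>\<close>

text \<open>With \<open>m'\<close> an inverse of \<open>m\<close> modulo \<open>q\<close>, the product is congruent to
  \<open>m\<^sup>n (r m')\<^sub>n\<close>, and \<open>n!\<close> divides every Pochhammer product of integers.\<close>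

lemma dvd_prod_arith_progression:
  fixes r m q :: int
  assumes "coprime m q" "q dvd fact n"
  shows "q dvd (\<Prod>i = 0..<n. r + int i * m)"
proof -
  obtain m' where m': "[m * m' = 1] (mod q)" using cong_solve_coprime_int[OF assms(1)] by blast
  have "[(\<Prod>i = 0..<n. r + int i * m) = (\<Prod>i = 0..<n. m * (r * m' + int i))] (mod q)"
  proof (rule cong_prod)
    fix i
    have "[r * (m * m') + int i * m = r * 1 + int i * m] (mod q)"
      by (intro cong_add cong_mult cong_refl m')
    then show "[r + int i * m = m * (r * m' + int i)] (mod q)"
      by (simp add: algebra_simps cong_sym)
  qed
  also have "(\<Prod>i = 0..<n. m * (r * m' + int i)) = m ^ n * pochhammer (r * m') n"
    by (simp add: pochhammer_prod prod.distrib)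
  finally have "[(\<Prod>i = 0..<n. r + int i * m) = m ^ n * pochhammer (r * m') n] (mod q)" .
  moreover have "q dvd m ^ n * pochhammer (r * m') n"
    using dvd_trans[OF assms(2) fact_dvd_pochhammer] by (rule dvd_mult)
  ultimately show ?thesis by (simp only: cong_dvd_iff)
qed

lemma p_integral_pochhammer_div_fact:
  assumes p: "prime p" and x: "p_integral p x"
  shows "p_integral p (pochhammer x n / fact n)"
proof -
  obtain r m where m: "m \<noteq> 0" "coprime m (int p)" and x_eq: "x = of_int r / of_int m"
    using x unfolding p_integral_def by blast
  have "(fact n :: int) \<noteq> 0" "\<not> is_unit (int p)" using p by auto
  then obtain N u where u: "(fact n :: int) = int p ^ N * u" "\<not> int p dvd u"
    using multiplicity_decompose' by blast
  define A where "A = (\<Prod>i = 0..<n. r + int i * m)"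
  have "int p ^ N dvd A"
    unfolding A_def using m(2) u(1) by (intro dvd_prod_arith_progression) auto
  then obtain A' where A': "A = int p ^ N * A'" by blast
  have "pochhammer x n = (\<Prod>i = 0..<n. of_int (r + int i * m) / of_int m)"
    unfolding pochhammer_prod x_eq using m(1) by (intro prod.cong) (auto simp: field_simps)
  also have "\<dots> = of_int A / of_int m ^ n"
    unfolding A_def by (simp add: prod_dividef)
  finally have "pochhammer x n / fact n = of_int (int p ^ N * A') / (of_int m ^ n * of_int (int p ^ N * u))"
    unfolding A' by (metis divide_divide_eq_left of_int_fact u(1))
  also have "\<dots> = of_int A' / of_int (m ^ n * u)"
    using p m(1) u(2) by (simp add: prime_gt_0_nat)
  finally have "pochhammer x n / fact n = of_int A' / of_int (m ^ n * u)" .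
  moreover have "m ^ n * u \<noteq> 0" using m(1) u(2) by auto
  moreover have "coprime (m ^ n * u) (int p)"
    using m(2) prime_imp_coprime[of "int p" u] u(2) p by (simp add: coprime_commute)
  ultimately show ?thesis unfolding p_integral_def by blast
qed

section \<open>The hypergeometric term and its derivative in the shift\<close>

definition hterm :: "rat \<Rightarrow> nat \<Rightarrow> rat" where
  "hterm x n = pochhammer x n * pochhammer (1 - x) n / (fact n)\<^sup>2"

definition shifted_hterm :: "rat \<Rightarrow> rat \<Rightarrow> nat \<Rightarrow> rat" where
  "shifted_hterm x t j =
     pochhammer (x + t) j * pochhammer (1 - x + t) j / (pochhammer (1 + t) j)\<^sup>2"

definition harmonic :: "nat \<Rightarrow> rat" where
  "harmonic n = (\<Sum>k = 1..n. 1 / of_nat k)"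

text \<open>\<open>hterm_deriv x j\<close> is the derivative of \<open>shifted_hterm x t j\<close> in \<open>t\<close> at \<open>t = 0\<close>;
  \<open>hterm_conv x j\<close> is a denominator-free expression for the contribution
  \<open>hterm x j * (\<Sum>i<j. 1 / (x + i) + 1 / (1 - x + i))\<close> of the two numerators.\<close>

definition hterm_conv :: "rat \<Rightarrow> nat \<Rightarrow> rat" where
  "hterm_conv x j = (\<Sum>i<j. hterm x i / of_nat (j - i))"

definition hterm_deriv :: "rat \<Rightarrow> nat \<Rightarrow> rat" where
  "hterm_deriv x j = hterm_conv x j - 2 * hterm x j * harmonic j"

lemma hterm_0 [simp]: "hterm x 0 = 1"
  by (simp add: hterm_def)

lemma p_integral_hterm:
  assumes "prime p" "p_integral p x" shows "p_integral p (hterm x n)"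
proof -
  have "hterm x n = (pochhammer x n / fact n) * (pochhammer (1 - x) n / fact n)"
    unfolding hterm_def by (simp add: power2_eq_square)
  then show ?thesis
    using assms by (simp only:) (intro p_integral_mult p_integral_pochhammer_div_fact p_integral_diff p_integral_1)
qed

lemma hterm_Suc:
  "(of_nat (Suc j))\<^sup>2 * hterm x (Suc j) = (x + of_nat j) * (1 - x + of_nat j) * hterm x j"
proof -
  have "(of_nat (Suc j) :: rat) \<noteq> 0" "(fact j :: rat) \<noteq> 0" by (simp_all del: of_nat_Suc)
  then show ?thesis
    unfolding hterm_def pochhammer_Suc fact_Suc by (simp add: field_simps power2_eq_square del: of_nat_Suc)
qed

lemma hterm_add: "hterm x (n + j) = hterm x n * shifted_hterm x (of_nat n) j"
proof -
  have "(fact n :: rat) \<noteq> 0" "pochhammer (1 + of_nat n :: rat) j \<noteq> 0"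
    by (simp_all add: pochhammer_eq_0_iff)
  moreover have "(fact (n + j) :: rat) = fact n * pochhammer (1 + of_nat n) j"
    unfolding pochhammer_fact pochhammer_product' ..
  ultimately show ?thesis
    unfolding hterm_def shifted_hterm_def pochhammer_product' by (simp add: power_mult_distrib)
qed

lemma shifted_hterm_0 [simp]: "shifted_hterm x t 0 = 1"
  by (simp add: shifted_hterm_def)

lemma shifted_hterm_Suc:
  assumes "t \<ge> 0"
  shows "(of_nat (Suc j) + t)\<^sup>2 * shifted_hterm x t (Suc j)
    = (x + t + of_nat j) * (1 - x + t + of_nat j) * shifted_hterm x t j"
proof -
  have "pochhammer (1 + t) j \<noteq> 0" "of_nat (Suc j) + t \<noteq> 0"
    using assms by (auto simp: pochhammer_eq_0_iff add_pos_nonneg simp del: of_nat_Suc)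
  moreover have "1 + t + of_nat j = of_nat (Suc j) + t" by simp
  ultimately have "shifted_hterm x t (Suc j) = shifted_hterm x t j
      * ((x + t + of_nat j) * (1 - x + t + of_nat j)) / (of_nat (Suc j) + t)\<^sup>2"
    unfolding shifted_hterm_def pochhammer_Suc by (simp add: power_mult_distrib ac_simps)
  with \<open>of_nat (Suc j) + t \<noteq> 0\<close> show ?thesis by (simp add: ac_simps)
qed

lemma harmonic_Suc: "harmonic (Suc j) = harmonic j + 1 / of_nat (Suc j)"
  unfolding harmonic_def by simp

lemma harmonic_0 [simp]: "harmonic 0 = 0"
  unfolding harmonic_def by simp

text \<open>The key identity is \<open>(x + j)(1 - x + j) - (x + i)(1 - x + i) = (j - i)(j + i + 1)\<close>.\<close>

lemma hterm_factor_mult_conv: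
  "(x + of_nat j) * (1 - x + of_nat j) * hterm_conv x j
    = (\<Sum>i<j. (of_nat j + of_nat i + 1) * hterm x i)
      + (\<Sum>i<Suc j. (of_nat i)\<^sup>2 * hterm x i / of_nat (Suc j - i))"
proof -
  define q where "q = (x + of_nat j) * (1 - x + of_nat j)"
  have "q * hterm_conv x j = (\<Sum>i<j. (of_nat j + of_nat i + 1) * hterm x i
      + (of_nat (Suc i))\<^sup>2 * hterm x (Suc i) / of_nat (Suc j - Suc i))"
    unfolding hterm_conv_def sum_distrib_left
  proof (rule sum.cong[OF refl])
    fix i assume "i \<in> {..<j}"
    then have "(of_nat (j - i) :: rat) = of_nat j - of_nat i" "(of_nat j - of_nat i :: rat) \<noteq> 0"
      by (simp_all add: of_nat_diff)
    moreover have "q * hterm x i = (of_nat j - of_nat i) * (of_nat j + of_nat i + 1) * hterm x i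
        + (of_nat (Suc i))\<^sup>2 * hterm x (Suc i)"
      unfolding hterm_Suc q_def by (simp add: algebra_simps power2_eq_square)
    ultimately show "q * (hterm x i / of_nat (j - i)) = (of_nat j + of_nat i + 1) * hterm x i
        + (of_nat (Suc i))\<^sup>2 * hterm x (Suc i) / of_nat (Suc j - Suc i)"
      by (simp add: field_simps)
  qed
  then show ?thesis
    unfolding q_def sum.lessThan_Suc_shift by (simp add: sum.distrib)
qed

lemma square_mult_hterm_conv:
  "(of_nat j)\<^sup>2 * hterm_conv x j
    = (\<Sum>i<j. (of_nat i)\<^sup>2 * hterm x i / of_nat (j - i)) + (\<Sum>i<j. (of_nat j + of_nat i) * hterm x i)"
proof -
  have "(of_nat j)\<^sup>2 * (hterm x i / of_nat (j - i))
      = (of_nat i)\<^sup>2 * hterm x i / of_nat (j - i) + (of_nat j + of_nat i) * hterm x i"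
    if "i < j" for i
  proof -
    have "(of_nat (j - i) :: rat) = of_nat j - of_nat i" "(of_nat j - of_nat i :: rat) \<noteq> 0"
      using that by (simp_all add: of_nat_diff)
    moreover have "(of_nat j)\<^sup>2 = (of_nat i)\<^sup>2 + (of_nat j - of_nat i) * (of_nat j + of_nat i :: rat)"
      by (simp add: algebra_simps power2_eq_square)
    ultimately show ?thesis by (simp add: distrib_right add_divide_distrib)
  qed
  then show ?thesis
    unfolding hterm_conv_def sum_distrib_left sum.distrib[symmetric] by (intro sum.cong) auto
qed

lemma hterm_conv_Suc:
  "(of_nat (Suc j))\<^sup>2 * hterm_conv x (Suc j)
    = (x + of_nat j) * (1 - x + of_nat j) * hterm_conv x j + (2 * of_nat j + 1) * hterm x j"
  unfolding square_mult_hterm_conv hterm_factor_mult_conv by (simp add: algebra_simps)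

lemma hterm_deriv_Suc:
  "(of_nat (Suc j))\<^sup>2 * hterm_deriv x (Suc j)
    = (x + of_nat j) * (1 - x + of_nat j) * hterm_deriv x j + (2 * of_nat j + 1) * hterm x j
      - 2 * of_nat (Suc j) * hterm x (Suc j)"
proof -
  define s :: rat where "s = of_nat (Suc j)"
  have "s \<noteq> 0" unfolding s_def by (simp del: of_nat_Suc)
  then have "s\<^sup>2 * hterm_deriv x (Suc j)
      = s\<^sup>2 * hterm_conv x (Suc j) - 2 * (s\<^sup>2 * hterm x (Suc j)) * harmonic j - 2 * s * hterm x (Suc j)"
    unfolding hterm_deriv_def harmonic_Suc s_def[symmetric] by (simp add: field_simps power2_eq_square)
  then show ?thesis
    unfolding s_def hterm_conv_Suc hterm_Suc hterm_deriv_def by (simp add: algebra_simps)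
qed

lemma p_integral_harmonic:
  assumes "prime p" "j < p" shows "p_integral p (harmonic j)"
  unfolding harmonic_def using assms
  by (intro p_integral_sum p_integral_divide_of_nat p_integral_1) (auto dest: dvd_imp_le)

lemma p_integral_hterm_deriv:
  assumes p: "prime p" and "p_integral p x" "j < p" shows "p_integral p (hterm_deriv x j)"
proof -
  have "p_integral p (hterm_conv x j)"
    unfolding hterm_conv_def using assms
    by (intro p_integral_sum p_integral_divide_of_nat p_integral_hterm) (auto dest: dvd_imp_le)
  then show ?thesis
    unfolding hterm_deriv_def using assms
    by (intro p_integral_diff p_integral_mult p_integral_numeral p_integral_hterm p_integral_harmonic)
qed

definition shift_error :: "rat \<Rightarrow> rat \<Rightarrow> nat \<Rightarrow> rat" where
  "shift_error x t j = shifted_hterm x t j - hterm x j - t * hterm_deriv x j"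

lemma shift_error_step:
  fixes q s t T D T' D' U U' :: "'a :: comm_ring_1"
  assumes "s\<^sup>2 * T' = q * T" and "s\<^sup>2 * D' = q * D + (2 * s - 1) * T - 2 * s * T'"
    and "(s + t)\<^sup>2 * U' = (q + (2 * s - 1) * t + t\<^sup>2) * U"
  shows "(s + t)\<^sup>2 * (U' - T' - t * D') = (q + (2 * s - 1) * t + t\<^sup>2) * (U - T - t * D)
    + t\<^sup>2 * (T + (2 * s - 1 + t) * D - T' - (2 * s + t) * D')"
proof -
  have "(s + t)\<^sup>2 * (U' - T' - t * D') - ((q + (2 * s - 1) * t + t\<^sup>2) * (U - T - t * D)
      + t\<^sup>2 * (T + (2 * s - 1 + t) * D - T' - (2 * s + t) * D'))
    = ((s + t)\<^sup>2 * U' - (q + (2 * s - 1) * t + t\<^sup>2) * U) - (s\<^sup>2 * T' - q * T)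
      - t * (s\<^sup>2 * D' - (q * D + (2 * s - 1) * T - 2 * s * T'))"
    by (simp add: algebra_simps power2_eq_square)
  with assms show ?thesis by simp
qed

lemma shift_error_Suc:
  fixes j :: nat and s :: rat
  defines "s \<equiv> of_nat (Suc j)"
  assumes "t \<ge> 0"
  shows "(s + t)\<^sup>2 * shift_error x t (Suc j)
    = ((x + of_nat j) * (1 - x + of_nat j) + (2 * s - 1) * t + t\<^sup>2) * shift_error x t j
      + t\<^sup>2 * (hterm x j + (2 * s - 1 + t) * hterm_deriv x j
        - hterm x (Suc j) - (2 * s + t) * hterm_deriv x (Suc j))"
  unfolding shift_error_def
proof (rule shift_error_step)
  show "s\<^sup>2 * hterm x (Suc j) = (x + of_nat j) * (1 - x + of_nat j) * hterm x j"
    unfolding s_def by (rule hterm_Suc)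
  show "s\<^sup>2 * hterm_deriv x (Suc j) = (x + of_nat j) * (1 - x + of_nat j) * hterm_deriv x j
      + (2 * s - 1) * hterm x j - 2 * s * hterm x (Suc j)"
    unfolding s_def hterm_deriv_Suc by simp
  show "(s + t)\<^sup>2 * shifted_hterm x t (Suc j)
      = ((x + of_nat j) * (1 - x + of_nat j) + (2 * s - 1) * t + t\<^sup>2) * shifted_hterm x t j"
    using shifted_hterm_Suc[OF assms(2), of j x] unfolding s_def
    by (simp add: algebra_simps power2_eq_square)
qed

text \<open>The inhomogeneous part of the recursion carries the factor \<open>t\<^sup>2\<close>, and the
  denominators \<open>(j + 1 + t)\<^sup>2\<close> stay prime to \<open>p\<close> while \<open>j < p\<close>.\<close>

lemma shift_error_mod_prime_square:
  assumes p: "prime p" and x: "p_integral p x" and t: "t = of_nat (a * p)" and "j < p"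
  shows "p_power_dvd p 2 (shift_error x t j)"
  using \<open>j < p\<close>
proof (induction j)
  case 0
  then show ?case by (simp add: shift_error_def hterm_deriv_def hterm_conv_def)
next
  case (Suc j)
  define s :: rat where "s = of_nat (Suc j)"
  define Q where "Q = (x + of_nat j) * (1 - x + of_nat j) + (2 * s - 1) * t + t\<^sup>2"
  define R where "R = hterm x j + (2 * s - 1 + t) * hterm_deriv x j
    - hterm x (Suc j) - (2 * s + t) * hterm_deriv x (Suc j)"
  have not_dvd: "\<not> p dvd Suc j + a * p"
    using Suc.prems dvd_add_left_iff[of p "a * p" "Suc j"] by (auto dest: dvd_imp_le)
  have st: "s + t = of_nat (Suc j + a * p)" unfolding s_def t by simp
  then have "s + t \<noteq> 0" using not_dvd by (metis dvd_0_right of_nat_eq_0_iff)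
  moreover have "(s + t)\<^sup>2 * shift_error x t (Suc j) = Q * shift_error x t j + t\<^sup>2 * R"
    unfolding Q_def R_def s_def using shift_error_Suc[of t j x] t by simp
  ultimately have eq: "shift_error x t (Suc j)
      = (Q * shift_error x t j + t\<^sup>2 * R) / of_nat ((Suc j + a * p)\<^sup>2)"
    unfolding of_nat_power st[symmetric] by (simp add: eq_divide_eq mult.commute)
  have "p_integral p Q" "p_integral p R"
    unfolding Q_def R_def s_def t using p x Suc.prems
    by (intro p_integral_add p_integral_diff p_integral_mult p_integral_power p_integral_of_nat
        p_integral_numeral p_integral_1 p_integral_hterm p_integral_hterm_deriv; simp)+
  have "p_power_dvd p 2 (t\<^sup>2 * R)"
    unfolding t using \<open>p_integral p R\<close> by (rule p_power_dvd_multiple_square)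
  then have "p_power_dvd p 2 (Q * shift_error x t j + t\<^sup>2 * R)"
    using Suc \<open>p_integral p Q\<close> by (intro p_power_dvd_add[OF p_power_dvd_mult_integral(2)]) simp_all
  then show ?case
    unfolding eq using p not_dvd by (intro p_power_dvd_divide_of_nat) (auto simp: prime_dvd_power_iff)
qed

section \<open>The derivative terms sum to a multiple of \<open>p\<close>\<close>

definition recip_pair_sum :: "nat \<Rightarrow> nat \<Rightarrow> rat" where
  "recip_pair_sum n i = (\<Sum>k = 1..i. 1 / (of_nat k * of_nat (n - k)))"

lemma sum_hterm_conv_div:
  "(\<Sum>j<n. hterm_conv x j / of_nat j)
    = (\<Sum>i<n. hterm x i * (\<Sum>j\<in>{i<..<n}. 1 / (of_nat (j - i) * of_nat j)))"
proof -
  have "(\<Sum>j<n. hterm_conv x j / of_nat j)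
      = (\<Sum>j\<in>{..<n}. \<Sum>i\<in>{i. i \<in> {..<n} \<and> i < j}. hterm x i * (1 / (of_nat (j - i) * of_nat j)))"
    unfolding hterm_conv_def sum_divide_distrib
    by (intro sum.cong refl) (auto intro: sum.cong)
  also have "\<dots> = (\<Sum>i\<in>{..<n}. \<Sum>j\<in>{j. j \<in> {..<n} \<and> i < j}. hterm x i * (1 / (of_nat (j - i) * of_nat j)))"
    by (rule sum.swap_restrict) auto
  also have "\<dots> = (\<Sum>i<n. hterm x i * (\<Sum>j\<in>{i<..<n}. 1 / (of_nat (j - i) * of_nat j)))"
    unfolding sum_distrib_left by (intro sum.cong refl) (auto intro: sum.cong)
  finally show ?thesis .
qed

lemma sum_inverse_shifted: "(\<Sum>j\<in>{i<..<n}. 1 / (of_nat (j - i) :: rat)) = harmonic (n - 1 - i)"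
proof (cases "i < n")
  case True
  have "(\<Sum>j\<in>{i<..<n}. 1 / (of_nat (j - i) :: rat)) = (\<Sum>k = 1..n - 1 - i. 1 / of_nat k)"
    by (rule sum.reindex_bij_witness[where i = "\<lambda>k. k + i" and j = "\<lambda>j. j - i"]) auto
  then show ?thesis unfolding harmonic_def .
qed (simp add: harmonic_def)

lemma sum_inverse_tail:
  assumes "i < n" shows "(\<Sum>j\<in>{i<..<n}. 1 / (of_nat j :: rat)) = harmonic (n - 1) - harmonic i"
proof -
  have "{1..n - 1} = {1..i} \<union> {i<..<n}" "{1..i} \<inter> {i<..<n} = {}" using assms by auto
  then have "harmonic (n - 1) = harmonic i + (\<Sum>j\<in>{i<..<n}. 1 / (of_nat j :: rat))"
    unfolding harmonic_def by (simp add: sum.union_disjoint)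
  then show ?thesis by simp
qed

lemma reciprocal_pair:
  fixes a b :: "'a :: field"
  assumes "a \<noteq> b" "b \<noteq> 0"
  shows "1 / b - 1 / (a - b) = 2 / b - a / (b * (a - b))"
  using assms by (simp add: field_simps)

lemma harmonic_reflection:
  assumes "i < n"
  shows "harmonic (n - 1 - i) - harmonic (n - 1) + harmonic i
    = 2 * harmonic i - of_nat n * recip_pair_sum n i"
  using assms
proof (induction i)
  case 0
  then show ?case by (simp add: recip_pair_sum_def)
next
  case (Suc i)
  define k :: rat where "k = of_nat (Suc i)"
  have diff: "(of_nat (n - Suc i) :: rat) = of_nat n - k" "n - 1 - i = Suc (n - 1 - Suc i)"
    unfolding k_def using Suc.prems by (simp_all only: of_nat_diff less_imp_le)
  then have "(of_nat (Suc (n - 1 - Suc i)) :: rat) = of_nat n - k"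
    using Suc.prems by (simp add: Suc_diff_Suc)
  have "of_nat n \<noteq> k" "k \<noteq> 0" unfolding k_def using Suc.prems by (simp_all del: of_nat_Suc)
  have "harmonic (n - 1 - Suc i) - harmonic (n - 1) + harmonic (Suc i)
      = (harmonic (n - 1 - i) - harmonic (n - 1) + harmonic i) + (1 / k - 1 / (of_nat n - k))"
    unfolding diff(2) harmonic_Suc \<open>of_nat (Suc (n - 1 - Suc i)) = of_nat n - k\<close> k_def by simp
  also have "\<dots> = 2 * harmonic i - of_nat n * recip_pair_sum n i + (2 / k - of_nat n / (k * (of_nat n - k)))"
    using Suc reciprocal_pair[OF \<open>of_nat n \<noteq> k\<close> \<open>k \<noteq> 0\<close>] by simp
  also have "\<dots> = 2 * harmonic (Suc i) - of_nat n * recip_pair_sum n (Suc i)"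
  proof -
    have "recip_pair_sum n (Suc i) = recip_pair_sum n i + 1 / (k * (of_nat n - k))"
      by (simp add: recip_pair_sum_def diff(1) k_def)
    then show ?thesis unfolding harmonic_Suc k_def[symmetric] by (simp add: algebra_simps)
  qed
  finally show ?case .
qed

lemma sum_inverse_diff_mult:
  assumes "0 < i" "i < n"
  shows "(\<Sum>j\<in>{i<..<n}. 1 / (of_nat (j - i) * of_nat j) :: rat)
    = (2 * harmonic i - of_nat n * recip_pair_sum n i) / of_nat i"
proof -
  have "(\<Sum>j\<in>{i<..<n}. 1 / (of_nat (j - i) * of_nat j) :: rat)
      = (\<Sum>j\<in>{i<..<n}. (1 / of_nat (j - i) - 1 / of_nat j) / of_nat i)"
  proof (rule sum.cong[OF refl])
    fix j assume "j \<in> {i<..<n}"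
    then have "(of_nat (j - i) :: rat) = of_nat j - of_nat i"
      "(of_nat j - of_nat i :: rat) \<noteq> 0" "(of_nat j :: rat) \<noteq> 0"
      using assms by (auto simp: of_nat_diff)
    then show "1 / (of_nat (j - i) * of_nat j) = (1 / of_nat (j - i) - 1 / of_nat j) / (of_nat i :: rat)"
      using assms by (simp add: field_simps)
  qed
  also have "\<dots> = (harmonic (n - 1 - i) - (harmonic (n - 1) - harmonic i)) / of_nat i"
    unfolding sum_divide_distrib[symmetric] sum_subtractf sum_inverse_shifted sum_inverse_tail[OF assms(2)] ..
  also have "\<dots> = (2 * harmonic i - of_nat n * recip_pair_sum n i) / of_nat i"
    using harmonic_reflection[OF assms(2)] by (simp add: algebra_simps)
  finally show ?thesis .
qed

lemma p_integral_recip_pair_sum: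
  assumes "prime p" "i < p" shows "p_integral p (recip_pair_sum p i)"
  unfolding recip_pair_sum_def
proof (intro p_integral_sum)
  fix k assume "k \<in> {1..i}"
  then have "\<not> p dvd k * (p - k)"
    using assms by (auto simp: prime_dvd_mult_iff dest: dvd_imp_le)
  then show "p_integral p (1 / (of_nat k * of_nat (p - k)))"
    using p_integral_divide_of_nat[OF assms(1) p_integral_1] by (metis of_nat_mult)
qed

lemma prime_dvd_sum_squares:
  fixes p :: nat
  assumes p: "prime p" and "p > 3" shows "p dvd (\<Sum>k<p. k\<^sup>2)"
proof -
  have "6 * (\<Sum>k<Suc m. k\<^sup>2) = m * (m + 1) * (2 * m + 1)" for m :: nat
    by (induction m) (simp_all add: algebra_simps power2_eq_square)
  from this[of "p - 1"] have "p dvd 6 * (\<Sum>k<p. k\<^sup>2)"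
    using \<open>p > 3\<close> by (simp add: mult.commute[of "p - 1"] mult.assoc)
  moreover have "\<not> p dvd 6"
  proof
    assume "p dvd 6"
    then have "p dvd 2 \<or> p dvd 3" using prime_dvd_mult_iff[OF p, of 2 3] by simp
    then show False using \<open>p > 3\<close> by (auto dest: dvd_imp_le)
  qed
  ultimately show ?thesis using p by (simp add: prime_dvd_mult_iff)
qed

lemma inverse_mod_prime_permutation:
  fixes p :: nat
  assumes p: "prime p"
  obtains g where "bij_betw g {0<..<p} {0<..<p}" "\<And>j. j \<in> {0<..<p} \<Longrightarrow> [j * g j = 1] (mod p)"
proof -
  define g where "g j = (THE y. 0 < y \<and> y < p \<and> [j * y = 1] (mod p))" for j
  have g: "0 < g j \<and> g j < p \<and> [j * g j = 1] (mod p)" if "j \<in> {0<..<p}" for j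
  proof -
    have "\<exists>!y. 0 < y \<and> y < p \<and> [j * y = 1] (mod p)"
      using cong_solve_unique_nontrivial[of p 1 j] p that by simp
    then show ?thesis unfolding g_def by (rule theI')
  qed
  have "inj_on g {0<..<p}"
  proof (rule inj_onI)
    fix i j assume ij: "i \<in> {0<..<p}" "j \<in> {0<..<p}" "g i = g j"
    have "[j * (i * g i) = i] (mod p)"
    proof -
      have "[i * (j * g j) = i * 1] (mod p)" using g[OF ij(2)] by (intro cong_mult cong_refl) simp
      moreover have "i * (j * g j) = j * (i * g i)" using ij(3) by simp
      ultimately show ?thesis by simp
    qed
    moreover have "[j * (i * g i) = j] (mod p)"
      using cong_mult[OF cong_refl[of j], of "i * g i" 1 p] g[OF ij(1)] by simp
    ultimately have "[i = j] (mod p)" by (metis cong_sym cong_trans)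
    then show "i = j" using ij(1,2) cong_less_modulus_unique_nat by auto
  qed
  moreover have "g ` {0<..<p} \<subseteq> {0<..<p}" using g by auto
  ultimately have "bij_betw g {0<..<p} {0<..<p}" by (simp add: bij_betw_def endo_inj_surj)
  with g show ?thesis by (intro that) auto
qed

lemma inverse_square_minus_square_mod_prime:
  assumes p: "prime p" and j: "0 < j" "j < p" and y: "[j * y = 1] (mod p)"
  shows "p_power_dvd p 1 (1 / (of_nat j * of_nat j) - of_nat (y\<^sup>2))"
proof -
  obtain z where z: "j * y = 1 + z * p"
    using y p unfolding cong_to_1'_nat by auto
  have "1 / (of_nat j * of_nat j) - of_nat (y\<^sup>2) = (1 - (of_nat (j * y))\<^sup>2) / (of_nat (j * j) :: rat)"
    using j by (simp add: field_simps power2_eq_square)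
  also have "\<dots> = of_nat p ^ 1 * ((- of_nat z * (2 + of_nat z * of_nat p)) / of_nat (j * j))"
    unfolding z by (simp add: field_simps power2_eq_square)
  finally have eq: "1 / (of_nat j * of_nat j) - of_nat (y\<^sup>2)
      = of_nat p ^ 1 * ((- of_nat z * (2 + of_nat z * of_nat p)) / of_nat (j * j) :: rat)" .
  have "\<not> p dvd j * j" using j p by (auto simp: prime_dvd_mult_iff dest: dvd_imp_le)
  then have "p_integral p ((- of_nat z * (2 + of_nat z * of_nat p)) / of_nat (j * j))"
    using p by (intro p_integral_divide_of_nat p_integral_mult p_integral_uminus p_integral_add) simp_all
  then show ?thesis using eq by (rule p_power_dvdI)
qed

text \<open>Modulo \<open>p\<close>, \<open>1 / j\<^sup>2\<close> is the square of the inverse of \<open>j\<close>, and inversion permutes the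
  units, so the sum is congruent to \<open>\<Sum>k<p. k\<^sup>2 = (p - 1) p (2p - 1) / 6\<close>.\<close>

lemma sum_inverse_squares_mod_prime:
  assumes p: "prime p" and "p > 3"
  shows "p_power_dvd p 1 (\<Sum>j\<in>{0<..<p}. 1 / (of_nat j * of_nat j))"
proof -
  obtain g where g: "bij_betw g {0<..<p} {0<..<p}" "\<And>j. j \<in> {0<..<p} \<Longrightarrow> [j * g j = 1] (mod p)"
    using inverse_mod_prime_permutation[OF p] by blast
  have "(\<Sum>j\<in>{0<..<p}. (g j)\<^sup>2) = (\<Sum>k\<in>{0<..<p}. k\<^sup>2)"
    using sum.reindex_bij_betw[OF g(1), of power2] .
  also have "\<dots> = (\<Sum>k<p. k\<^sup>2)"
    using \<open>p > 3\<close> by (intro sum.mono_neutral_left) auto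
  finally obtain w where "(\<Sum>j\<in>{0<..<p}. (g j)\<^sup>2) = p * w"
    using prime_dvd_sum_squares[OF assms] by (metis dvdE)
  then have "(\<Sum>j\<in>{0<..<p}. of_nat ((g j)\<^sup>2) :: rat) = of_nat p ^ 1 * of_nat w"
    by (simp only: of_nat_sum[symmetric]) simp
  then have "p_power_dvd p 1 (\<Sum>j\<in>{0<..<p}. of_nat ((g j)\<^sup>2) :: rat)"
    by (intro p_power_dvdI[of p "of_nat w"]) simp_all
  moreover have "p_power_dvd p 1 (\<Sum>j\<in>{0<..<p}. 1 / (of_nat j * of_nat j) - of_nat ((g j)\<^sup>2))"
    using p g(2) by (intro p_power_dvd_sum inverse_square_minus_square_mod_prime) auto
  ultimately have "p_power_dvd p 1 ((\<Sum>j\<in>{0<..<p}. 1 / (of_nat j * of_nat j) - of_nat ((g j)\<^sup>2))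
      + (\<Sum>j\<in>{0<..<p}. of_nat ((g j)\<^sup>2)))"
    by (rule p_power_dvd_add[rotated])
  then show ?thesis by (simp only: sum_subtractf diff_add_cancel)
qed

text \<open>After exchanging the summations the coefficient of \<open>hterm x i\<close> is a multiple of \<open>p\<close>
  for \<open>i > 0\<close>, and the \<open>i = 0\<close> term is \<open>\<Sum>0<j<p. 1 / j\<^sup>2\<close>.\<close>

lemma sum_hterm_deriv_div_mod_prime:
  assumes p: "prime p" and "p > 3" and x: "p_integral p x"
  shows "p_power_dvd p 1 (\<Sum>j<p. hterm_deriv x j / of_nat j)"
proof -
  define V where "V i = (\<Sum>j\<in>{i<..<p}. 1 / (of_nat (j - i) * of_nat j) :: rat)" for i
  define S where "S = (\<Sum>i<p. hterm x i * recip_pair_sum p i / of_nat i)"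
  have "hterm x i * V i - 2 * (hterm x i * harmonic i / of_nat i)
      = (if i = 0 then V 0 else 0) - of_nat p * (hterm x i * recip_pair_sum p i / of_nat i)"
    if "i < p" for i
  proof (cases "i = 0")
    case False
    then have V: "V i = (2 * harmonic i - of_nat p * recip_pair_sum p i) / of_nat i"
      unfolding V_def using sum_inverse_diff_mult[of i p] that by simp
    from False show ?thesis unfolding V by (simp add: field_simps)
  qed simp
  then have "(\<Sum>i<p. hterm x i * V i - 2 * (hterm x i * harmonic i / of_nat i)) = V 0 - of_nat p * S"
    unfolding S_def using \<open>p > 3\<close> by (simp add: sum_subtractf sum_distrib_left)
  moreover have "(\<Sum>j<p. hterm_deriv x j / of_nat j)
      = (\<Sum>i<p. hterm x i * V i - 2 * (hterm x i * harmonic i / of_nat i))"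
    unfolding hterm_deriv_def V_def diff_divide_distrib sum_subtractf sum_hterm_conv_div
    by (simp add: sum_distrib_left mult.assoc)
  moreover have "p_power_dvd p 1 (V 0)"
    unfolding V_def using sum_inverse_squares_mod_prime[OF p \<open>p > 3\<close>] by simp
  moreover have "p_integral p S"
    unfolding S_def
  proof (intro p_integral_sum)
    fix i assume "i \<in> {..<p}"
    show "p_integral p (hterm x i * recip_pair_sum p i / of_nat i)"
    proof (cases "i = 0")
      case False
      with \<open>i \<in> {..<p}\<close> p x show ?thesis
        by (intro p_integral_divide_of_nat p_integral_mult p_integral_hterm p_integral_recip_pair_sum)
          (auto dest: dvd_imp_le)
    qed (simp add: recip_pair_sum_def)
  qed
  ultimately show ?thesis
    by (simp add: p_power_dvd_diff p_power_dvdI)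
qed

section \<open>The two block sums\<close>

lemma sum_hterm_shift:
  "(\<Sum>k = n + 1..n + m. hterm x k / of_nat k)
    = hterm x n * (\<Sum>j = 1..m. shifted_hterm x (of_nat n) j / (of_nat n + of_nat j))"
proof -
  have "(\<Sum>k = n + 1..n + m. hterm x k / of_nat k) = (\<Sum>j = 1..m. hterm x (n + j) / of_nat (n + j))"
    by (rule sum.reindex_bij_witness[where i = "\<lambda>j. n + j" and j = "\<lambda>k. k - n"]) auto
  then show ?thesis by (simp add: hterm_add sum_distrib_left)
qed

lemma divide_first_order_split:
  fixes U T D t J :: "'a :: field"
  assumes "J \<noteq> 0" "t + J \<noteq> 0"
  shows "(U - T) / (t + J) = (U - T - t * D) / (t + J) + t * (D / J) - t\<^sup>2 * (D / (J * (t + J)))"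
proof -
  have "t * (D / J) - t\<^sup>2 * (D / (J * (t + J))) = (t * D * (t + J) - t * D * t) / (J * (t + J))"
    using assms by (simp add: diff_divide_distrib power2_eq_square)
  also have "t * D * (t + J) - t * D * t = J * (t * D)" by (simp add: algebra_simps)
  also have "J * (t * D) / (J * (t + J)) = t * D / (t + J)" using assms by simp
  finally show ?thesis by (simp add: diff_divide_distrib)
qed

lemma sum_shifted_hterm_minus_hterm_mod_prime:
  assumes p: "prime p" and "p > 3" and x: "p_integral p x" and t: "t = of_nat (a * p)"
  shows "p_power_dvd p 2 (\<Sum>j = 1..p - 1. (shifted_hterm x t j - hterm x j) / (t + of_nat j))"
proof -
  have not_dvd: "\<not> p dvd a * p + j" if "j \<in> {1..p - 1}" for j
    using that dvd_add_right_iff[of p "a * p" j] by (auto dest: dvd_imp_le)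
  have t_plus: "t + of_nat j = of_nat (a * p + j)" for j unfolding t by simp
  have split: "(shifted_hterm x t j - hterm x j) / (t + of_nat j)
      = shift_error x t j / of_nat (a * p + j) + t * (hterm_deriv x j / of_nat j)
        - t\<^sup>2 * (hterm_deriv x j / of_nat (j * (a * p + j)))" if "j \<in> {1..p - 1}" for j
  proof -
    have "(of_nat (j * (a * p + j)) :: rat) = of_nat j * (t + of_nat j)"
      unfolding t_plus by simp
    moreover have "(of_nat j :: rat) \<noteq> 0" "t + of_nat j \<noteq> 0"
      using that not_dvd[OF that] unfolding t_plus by (auto simp del: of_nat_add)
    ultimately show ?thesis
      unfolding shift_error_def t_plus[symmetric] by (simp only:) (rule divide_first_order_split)
  qed
  have "(\<Sum>j = 1..p - 1. (shifted_hterm x t j - hterm x j) / (t + of_nat j))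
      = (\<Sum>j = 1..p - 1. shift_error x t j / of_nat (a * p + j)) + t * (\<Sum>j<p. hterm_deriv x j / of_nat j)
        - t\<^sup>2 * (\<Sum>j = 1..p - 1. hterm_deriv x j / of_nat (j * (a * p + j)))"
  proof -
    have "{..<p} = insert 0 {1..p - 1}" using \<open>p > 3\<close> by auto
    then have "(\<Sum>j<p. hterm_deriv x j / of_nat j) = (\<Sum>j = 1..p - 1. hterm_deriv x j / of_nat j)" by simp
    with split show ?thesis
      by (simp add: sum.distrib sum_subtractf sum_distrib_left)
  qed
  moreover have "p_power_dvd p 2 (\<Sum>j = 1..p - 1. shift_error x t j / of_nat (a * p + j))"
    using p x t not_dvd \<open>p > 3\<close>
    by (intro p_power_dvd_sum p_power_dvd_divide_of_nat shift_error_mod_prime_square) auto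
  moreover have "p_power_dvd p (1 + 1) (t * (\<Sum>j<p. hterm_deriv x j / of_nat j))"
    unfolding t using p_power_dvd_multiple sum_hterm_deriv_div_mod_prime[OF p \<open>p > 3\<close> x]
    by (rule p_power_dvd_mult)
  moreover have "p_power_dvd p 2 (t\<^sup>2 * (\<Sum>j = 1..p - 1. hterm_deriv x j / of_nat (j * (a * p + j))))"
    unfolding t using p x not_dvd
    by (intro p_power_dvd_multiple_square p_integral_sum p_integral_divide_of_nat p_integral_hterm_deriv)
      (auto simp: prime_dvd_mult_iff dest: dvd_imp_le)
  ultimately show ?thesis by (simp add: p_power_dvd_add p_power_dvd_diff numeral_2_eq_2)
qed

theorem lemma2p3:
  fixes p :: nat and r m :: int and a :: nat and x :: rat
  assumes "prime p" and "p > 3"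
    and "0 < r" and "r < m" and "coprime m (int p)"
    and "x = of_int r / of_int m"
  shows "rat_cong
     (\<Sum>k = a*p+1 .. a*p+p-1.
        pochhammer x k * pochhammer (1 - x) k / (pochhammer 1 k)^2 * (1 / of_nat k))
     (pochhammer x (a*p) * pochhammer (1 - x) (a*p) / (pochhammer 1 (a*p))^2 *
      (\<Sum>k = 1 .. p-1.
        pochhammer x k * pochhammer (1 - x) k / (pochhammer 1 k)^2 * (1 / of_nat (a*p + k))))
     (int p ^ 2)"
proof -
  define t :: rat where "t = of_nat (a * p)"
  have x: "p_integral p x"
    unfolding p_integral_def using assms(3-6) by (intro exI[of _ r] exI[of _ m]) auto
  have hterm: "pochhammer y k * pochhammer (1 - y) k / (pochhammer 1 k)\<^sup>2 = hterm y k" for y k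
    unfolding hterm_def pochhammer_fact ..
  have "(\<Sum>k = a*p+1 .. a*p+p-1.
        pochhammer x k * pochhammer (1 - x) k / (pochhammer 1 k)^2 * (1 / of_nat k))
      = hterm x (a * p) * (\<Sum>j = 1..p - 1. shifted_hterm x t j / (t + of_nat j))"
    using sum_hterm_shift[where n = "a * p" and m = "p - 1" and x = x] \<open>p > 3\<close> unfolding hterm t_def by simp
  moreover have "pochhammer x (a*p) * pochhammer (1 - x) (a*p) / (pochhammer 1 (a*p))^2 *
      (\<Sum>k = 1 .. p-1.
        pochhammer x k * pochhammer (1 - x) k / (pochhammer 1 k)^2 * (1 / of_nat (a*p + k)))
      = hterm x (a * p) * (\<Sum>j = 1..p - 1. hterm x j / (t + of_nat j))"
    unfolding hterm t_def by simp
  moreover have "p_power_dvd p 2 (hterm x (a * p)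
      * (\<Sum>j = 1..p - 1. (shifted_hterm x t j - hterm x j) / (t + of_nat j)))"
    using assms(1,2) x t_def
    by (intro p_power_dvd_mult_integral(2) p_integral_hterm sum_shifted_hterm_minus_hterm_mod_prime)
  ultimately show ?thesis
    by (intro rat_cong_if_p_power_dvd)
      (simp add: right_diff_distrib diff_divide_distrib sum_subtractf)
qed

end
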